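(* Let $(M_I,\triangleright)$ and $(N_J,\triangleright)$ be factor systems. Then their function space $[M_I\to N_J]$ is a factor system. Moreover: (1) If the relations $\triangleright$ on $N_J$ satisfy (Fun), resp. (Stab), then so do the relations $\triangleright$ on $[M_I\to N_J]$. (2) If $M_I$ is inverse and $N_J$ is direct, then $[M_I\to N_J]$ is direct. (3) If $M_I$ is direct and $N_J$ is inverse, then $[M_I\to N_J]$ is inverse.
   Context: Let $(I,\le)$ be a non-empty directed preordered set. A system $(M_I,\triangleright)$ consists of sets $M_i$ ($i\in I$, regarded as pairwise disjoint) and, for $i\le i'$, relations $\triangleright\subseteq M_{i'}\times M_i$ (written $a_{i'}\triangleright a_i$), reflexive when $i=i'$. Elements $a_i\in M_i$, $b_j\in M_j$ are consistent, $a_i\approx b_j$, iff there are $i'\ge i,j$ and $c\in M_{i'}$ with $c\triangleright a_i$ and $c\triangleright b_j$. A prefactor system is a system with $a_{i'}\approx a_i\iff a_{i'}\triangleright a_i$ for all $i\le i'$. Condition (Fun): for all $i$ and $a_i,b_i\in M_i$, $a_i\approx b_i\iff a_i\triangleright b_i\iff a_i=b_i$. Condition (Stab): for all $i\le i'$, $a_{i'}\in M_{i'}$, $a_i,b_i\in M_i$: $a_{i'}\triangleright a_i$ and $a_i\approx b_i$ imply $a_{i'}\triangleright b_i$. $\approx$-embeddings: $\approx$-preserving maps $emb_{i,i'}:M_i\to M_{i'}$ ($i\le i'$) with $emb_{i,i}(a)\approx a$, $emb_{i',i''}(emb_{i,i'}(a))\approx emb_{i,i''}(a)$; coherent if $a_{i'}\triangleright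 a_i\Rightarrow emb_{i',i''}(a_{i'})\triangleright a_i$ for $i\le i'\le i''$. $\approx$-projections: $\approx$-preserving maps $proj_{i',i}:M_{i'}\to M_i$ with $proj_{i,i}(a)\approx a$, $proj_{i',i}(proj_{i'',i'}(a))\approx proj_{i'',i}(a)$; coherent if $a_{i''}\triangleright a_i\Rightarrow proj_{i'',i'}(a_{i''})\triangleright a_i$ for $i\le i'\le i''$. They form an $\approx$-embedding-projection pair if $proj_{i',i}(emb_{i,i'}(a))\approx a$. A factor system is a prefactor system with a coherent $\approx$-embedding-projection pair. A prefactor system is direct iff it has coherent $\approx$-embeddings with $a_{i'}\triangleright a_i\iff a_{i'}\approx emb_{i,i'}(a_i)$; inverse iff it has coherent $\approx$-projections with $a_{i'}\triangleright a_i\iff proj_{i',i}(a_{i'})\approx a_i$. Function space: for factor systems $M_I,N_J$, $[M_I\to N_J]$ is indexed by $I\times J$ with the product order, an index written $i\to j$; its state $[M_i\to N_j]$ is the set of all total functions $f:M_i\to N_j$ with $a\approx b\Rightarrow f(a)\approx f(b)$. For $i\to j\le i'\to j'$, $f'\triangleright f$ iff for all $a_{i'}\in M_{i'}$, $a_i\in M_i$ with $a_{i'}\triangleright a_i$ we have $f'(a_{i'})\triangleright f(a_i)$. Embeddings $emb_{i\to j,i'\to j'}(f)=emb_{j,j'}\circ f\circ proj_{i',i}$ and projections $proj_{i'\to j',i\to j}(f')=proj_{j',j}\circ f'\circ emb_{i,i'}$. *)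

theory Defs
  imports "HOL-Library.FuncSet"
begin

text \<open>A system (M_I, R) is given by an index set I with preorder le,
  states M i (i in I) and relations R i' i a' a meaning a' in M i' is
  related to a in M i (only for i le i').  Elements carry their index
  explicitly, so the states are implicitly disjoint.\<close>

definition directed_preorder :: "'i set \<Rightarrow> ('i \<Rightarrow> 'i \<Rightarrow> bool) \<Rightarrow> bool" where
  "directed_preorder I le \<longleftrightarrow> I \<noteq> {} \<and> (\<forall>i\<in>I. le i i)
     \<and> (\<forall>i\<in>I. \<forall>j\<in>I. \<forall>k\<in>I. le i j \<and> le j k \<longrightarrow> le i k)
     \<and> (\<forall>i\<in>I. \<forall>j\<in>I. \<exists>k\<in>I. le i k \<and> le j k)"

definition is_system :: "'i set \<Rightarrow> ('i \<Rightarrow> 'i \<Rightarrow> bool) \<Rightarrow> ('i \<Rightarrow> 'a set)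
    \<Rightarrow> ('i \<Rightarrow> 'i \<Rightarrow> 'a \<Rightarrow> 'a \<Rightarrow> bool) \<Rightarrow> bool" where
  "is_system I le M R \<longleftrightarrow> directed_preorder I le
     \<and> (\<forall>i' i a' a. R i' i a' a \<longrightarrow> i' \<in> I \<and> i \<in> I \<and> le i i' \<and> a' \<in> M i' \<and> a \<in> M i)
     \<and> (\<forall>i\<in>I. \<forall>a\<in>M i. R i i a a)"

definition consistent :: "'i set \<Rightarrow> ('i \<Rightarrow> 'i \<Rightarrow> bool) \<Rightarrow> ('i \<Rightarrow> 'a set)
    \<Rightarrow> ('i \<Rightarrow> 'i \<Rightarrow> 'a \<Rightarrow> 'a \<Rightarrow> bool) \<Rightarrow> 'i \<Rightarrow> 'a \<Rightarrow> 'i \<Rightarrow> 'a \<Rightarrow> bool" where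
  "consistent I le M R i a j b \<longleftrightarrow>
     (\<exists>k\<in>I. le i k \<and> le j k \<and> (\<exists>c\<in>M k. R k i c a \<and> R k j c b))"

definition prefactor_system where
  "prefactor_system I le M R \<longleftrightarrow> is_system I le M R \<and>
     (\<forall>i\<in>I. \<forall>i'\<in>I. le i i' \<longrightarrow> (\<forall>a'\<in>M i'. \<forall>a\<in>M i.
        consistent I le M R i' a' i a \<longleftrightarrow> R i' i a' a))"

definition cond_Fun where
  "cond_Fun I le M R \<longleftrightarrow> (\<forall>i\<in>I. \<forall>a\<in>M i. \<forall>b\<in>M i.
     (consistent I le M R i a i b \<longleftrightarrow> R i i a b) \<and> (R i i a b \<longleftrightarrow> a = b))"

definition cond_Stab where
  "cond_Stab I le M R \<longleftrightarrow> (\<forall>i\<in>I. \<forall>i'\<in>I. le i i' \<longrightarrow>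
     (\<forall>a'\<in>M i'. \<forall>a\<in>M i. \<forall>b\<in>M i.
        R i' i a' a \<and> consistent I le M R i a i b \<longrightarrow> R i' i a' b))"

text \<open>emb i i' : M i \<rightarrow> M i' and proj i' i : M i' \<rightarrow> M i, for i le i'.\<close>

definition cons_embeddings where
  "cons_embeddings I le M R emb \<longleftrightarrow>
     (\<forall>i\<in>I. \<forall>i'\<in>I. le i i' \<longrightarrow>
        (\<forall>a\<in>M i. emb i i' a \<in> M i') \<and>
        (\<forall>a\<in>M i. \<forall>b\<in>M i. consistent I le M R i a i b \<longrightarrow>
            consistent I le M R i' (emb i i' a) i' (emb i i' b))) \<and>
     (\<forall>i\<in>I. \<forall>a\<in>M i. consistent I le M R i (emb i i a) i a) \<and>
     (\<forall>i\<in>I. \<forall>i'\<in>I. \<forall>i''\<in>I. le i i' \<and> le i' i'' \<longrightarrow> (\<forall>a\<in>M i.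
        consistent I le M R i'' (emb i' i'' (emb i i' a)) i'' (emb i i'' a)))"

definition coherent_embeddings where
  "coherent_embeddings I le M R emb \<longleftrightarrow>
     (\<forall>i\<in>I. \<forall>i'\<in>I. \<forall>i''\<in>I. le i i' \<and> le i' i'' \<longrightarrow>
        (\<forall>a'\<in>M i'. \<forall>a\<in>M i. R i' i a' a \<longrightarrow> R i'' i (emb i' i'' a') a))"

definition cons_projections where
  "cons_projections I le M R proj \<longleftrightarrow>
     (\<forall>i\<in>I. \<forall>i'\<in>I. le i i' \<longrightarrow>
        (\<forall>a\<in>M i'. proj i' i a \<in> M i) \<and>
        (\<forall>a\<in>M i'. \<forall>b\<in>M i'. consistent I le M R i' a i' b \<longrightarrow>
            consistent I le M R i (proj i' i a) i (proj i' i b))) \<and>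
     (\<forall>i\<in>I. \<forall>a\<in>M i. consistent I le M R i (proj i i a) i a) \<and>
     (\<forall>i\<in>I. \<forall>i'\<in>I. \<forall>i''\<in>I. le i i' \<and> le i' i'' \<longrightarrow> (\<forall>a\<in>M i''.
        consistent I le M R i (proj i' i (proj i'' i' a)) i (proj i'' i a)))"

definition coherent_projections where
  "coherent_projections I le M R proj \<longleftrightarrow>
     (\<forall>i\<in>I. \<forall>i'\<in>I. \<forall>i''\<in>I. le i i' \<and> le i' i'' \<longrightarrow>
        (\<forall>a''\<in>M i''. \<forall>a\<in>M i. R i'' i a'' a \<longrightarrow> R i' i (proj i'' i' a'') a))"

definition emb_proj_pair where
  "emb_proj_pair I le M R emb proj \<longleftrightarrow>
     cons_embeddings I le M R emb \<and> cons_projections I le M R proj \<and>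
     (\<forall>i\<in>I. \<forall>i'\<in>I. le i i' \<longrightarrow>
        (\<forall>a\<in>M i. consistent I le M R i (proj i' i (emb i i' a)) i a))"

definition factor_system where
  "factor_system I le M R \<longleftrightarrow> prefactor_system I le M R \<and>
     (\<exists>emb proj. emb_proj_pair I le M R emb proj \<and>
        coherent_embeddings I le M R emb \<and> coherent_projections I le M R proj)"

definition direct_system where
  "direct_system I le M R \<longleftrightarrow> prefactor_system I le M R \<and>
     (\<exists>emb. cons_embeddings I le M R emb \<and> coherent_embeddings I le M R emb \<and>
        (\<forall>i\<in>I. \<forall>i'\<in>I. le i i' \<longrightarrow> (\<forall>a'\<in>M i'. \<forall>a\<in>M i.
           R i' i a' a \<longleftrightarrow> consistent I le M R i' a' i' (emb i i' a))))"

definition inverse_system where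
  "inverse_system I le M R \<longleftrightarrow> prefactor_system I le M R \<and>
     (\<exists>proj. cons_projections I le M R proj \<and> coherent_projections I le M R proj \<and>
        (\<forall>i\<in>I. \<forall>i'\<in>I. le i i' \<longrightarrow> (\<forall>a'\<in>M i'. \<forall>a\<in>M i.
           R i' i a' a \<longleftrightarrow> consistent I le M R i (proj i' i a') i a)))"

definition fs_le :: "('i \<Rightarrow> 'i \<Rightarrow> bool) \<Rightarrow> ('j \<Rightarrow> 'j \<Rightarrow> bool) \<Rightarrow> 'i \<times> 'j \<Rightarrow> 'i \<times> 'j \<Rightarrow> bool" where
  "fs_le leI leJ p q \<longleftrightarrow> leI (fst p) (fst q) \<and> leJ (snd p) (snd q)"

definition fs_states where
  "fs_states I leI M R J leJ N S p =
     {f \<in> M (fst p) \<rightarrow>\<^sub>E N (snd p).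
        \<forall>a\<in>M (fst p). \<forall>b\<in>M (fst p). consistent I leI M R (fst p) a (fst p) b \<longrightarrow>
           consistent J leJ N S (snd p) (f a) (snd p) (f b)}"

definition fs_rel where
  "fs_rel I leI M R J leJ N S q p f' f \<longleftrightarrow>
     q \<in> I \<times> J \<and> p \<in> I \<times> J \<and> fs_le leI leJ p q \<and>
     f' \<in> fs_states I leI M R J leJ N S q \<and> f \<in> fs_states I leI M R J leJ N S p \<and>
     (\<forall>a'\<in>M (fst q). \<forall>a\<in>M (fst p). R (fst q) (fst p) a' a \<longrightarrow>
        S (snd q) (snd p) (f' a') (f a))"

end

theory Submission
  imports Defs
begin

text \<open>Within one state the relation \<open>\<triangleright>\<close> of a prefactor system is an equivalence, so all
  conditions on embeddings and projections are statements about maps between setoids, and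
  the states of \<open>[M\<^sub>I \<rightarrow> N\<^sub>J]\<close> are the setoid maps.  Embeddings and projections of the
  function space are the conjugations \<open>f \<mapsto> emb \<circ> f \<circ> proj\<close> and \<open>f \<mapsto> proj \<circ> f \<circ> emb\<close>;
  each of their axioms follows by composing, up to \<open>\<approx>\<close>, the corresponding axioms of the
  maps on either side of \<open>f\<close>.  Consistency of \<open>f'\<close> and \<open>f\<close> implies \<open>f' \<triangleright> f\<close> because a coherent
  embedding of \<open>M\<^sub>I\<close> lifts a related pair \<open>a' \<triangleright> a\<close> to the index of a common upper bound,
  where consistency in \<open>N\<^sub>J\<close> can be read off.\<close>

definition rel_hom :: "'a set \<Rightarrow> ('a \<Rightarrow> 'a \<Rightarrow> bool) \<Rightarrow> 'b set \<Rightarrow> ('b \<Rightarrow> 'b \<Rightarrow> bool) \<Rightarrow> ('a \<Rightarrow> 'b) \<Rightarrow> bool" where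
  "rel_hom A r B s h \<longleftrightarrow> h \<in> A \<rightarrow> B \<and> (\<forall>a\<in>A. \<forall>b\<in>A. r a b \<longrightarrow> s (h a) (h b))"

lemma rel_hom_comp: "rel_hom A r B s g \<Longrightarrow> rel_hom B s C t h \<Longrightarrow> rel_hom A r C t (\<lambda>a. h (g a))"
  unfolding rel_hom_def by fastforce

lemma rel_hom_restrict: "rel_hom A r B s h \<Longrightarrow> rel_hom A r B s (\<lambda>a\<in>A. h a)"
  unfolding rel_hom_def by auto

lemma rel_hom_id: "rel_hom A r A r (\<lambda>a. a)"
  unfolding rel_hom_def by simp

lemma restrict_comp_restrict:
  "\<psi> \<in> A \<rightarrow> B \<Longrightarrow> (\<lambda>a\<in>A. \<phi> ((\<lambda>b\<in>B. \<phi>' (f (\<psi>' b))) (\<psi> a))) = (\<lambda>a\<in>A. \<phi> (\<phi>' (f (\<psi>' (\<psi> a)))))"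
  by (intro restrict_ext) auto

locale prefactor =
  fixes I :: "'i set" and le :: "'i \<Rightarrow> 'i \<Rightarrow> bool" and M :: "'i \<Rightarrow> 'a set"
    and R :: "'i \<Rightarrow> 'i \<Rightarrow> 'a \<Rightarrow> 'a \<Rightarrow> bool"
  assumes prefactor_system: "prefactor_system I le M R"
begin

lemma rel_dom: "R i' i a' a \<Longrightarrow> i' \<in> I \<and> i \<in> I \<and> le i i' \<and> a' \<in> M i' \<and> a \<in> M i"
  using prefactor_system unfolding prefactor_system_def is_system_def by blast

lemma rel_refl: "i \<in> I \<Longrightarrow> a \<in> M i \<Longrightarrow> R i i a a"
  using prefactor_system unfolding prefactor_system_def is_system_def by blast

lemma directed_preorder: "directed_preorder I le"
  using prefactor_system unfolding prefactor_system_def is_system_def by blast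

lemma nonempty: "I \<noteq> {}"
  using directed_preorder unfolding directed_preorder_def by blast

lemma directed: "i \<in> I \<Longrightarrow> j \<in> I \<Longrightarrow> \<exists>k\<in>I. le i k \<and> le j k"
  using directed_preorder unfolding directed_preorder_def by blast

lemma le_refl: "i \<in> I \<Longrightarrow> le i i"
  using directed_preorder unfolding directed_preorder_def by blast

lemma le_trans: "le i j \<Longrightarrow> le j k \<Longrightarrow> i \<in> I \<Longrightarrow> j \<in> I \<Longrightarrow> k \<in> I \<Longrightarrow> le i k"
  using directed_preorder unfolding directed_preorder_def by blast

lemma consistent_iff_rel:
  "le i i' \<Longrightarrow> i \<in> I \<Longrightarrow> i' \<in> I \<Longrightarrow> a' \<in> M i' \<Longrightarrow> a \<in> M i \<Longrightarrow>
    consistent I le M R i' a' i a \<longleftrightarrow> R i' i a' a"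
  using prefactor_system unfolding prefactor_system_def by blast

lemma consistent_same_iff [simp]: "consistent I le M R i a i b \<longleftrightarrow> R i i a b"
proof
  assume "consistent I le M R i a i b"
  moreover from this obtain k c where "R k i c a" "R k i c b"
    unfolding consistent_def by blast
  ultimately show "R i i a b"
    using consistent_iff_rel rel_dom[of k i c a] rel_dom[of k i c b] le_refl by blast
next
  assume "R i i a b"
  then show "consistent I le M R i a i b"
    using consistent_iff_rel rel_dom[of i i a b] le_refl by blast
qed

lemma rel_sym:
  assumes "R i i a b" shows "R i i b a"
proof -
  have "i \<in> I" "a \<in> M i"
    using rel_dom[OF assms] by auto
  then have "consistent I le M R i b i a"
    unfolding consistent_def using assms rel_refl[of i a] le_refl[of i] by blast
  then show ?thesis by simp
qed

lemma rel_trans: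
  assumes "R i i a b" "R i i b c" shows "R i i a c"
proof -
  have "i \<in> I"
    using rel_dom[OF assms(1)] by auto
  then have "consistent I le M R i a i c"
    unfolding consistent_def using assms rel_sym[OF assms(1)] le_refl[of i] rel_dom[OF assms(1)] by blast
  then show ?thesis by simp
qed

lemma coherent_embeddingsD:
  "coherent_embeddings I le M R emb \<Longrightarrow> R i' i a' a \<Longrightarrow> le i' i'' \<Longrightarrow> i'' \<in> I \<Longrightarrow>
    R i'' i (emb i' i'' a') a"
  unfolding coherent_embeddings_def using rel_dom[of i' i a' a] by blast

lemma coherent_projectionsD:
  "coherent_projections I le M R proj \<Longrightarrow> R i'' i a'' a \<Longrightarrow> le i i' \<Longrightarrow> le i' i'' \<Longrightarrow> i' \<in> I \<Longrightarrow>
    R i' i (proj i'' i' a'') a"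
  unfolding coherent_projections_def using rel_dom[of i'' i a'' a] by blast

abbreviation state_map :: "'i \<Rightarrow> 'i \<Rightarrow> ('a \<Rightarrow> 'a) \<Rightarrow> bool" where
  "state_map i i' h \<equiv> rel_hom (M i) (R i i) (M i') (R i' i') h"

lemma cons_embeddings_iff:
  "cons_embeddings I le M R emb \<longleftrightarrow>
     (\<forall>i\<in>I. \<forall>i'\<in>I. le i i' \<longrightarrow> state_map i i' (emb i i')) \<and>
     (\<forall>i\<in>I. \<forall>a\<in>M i. R i i (emb i i a) a) \<and>
     (\<forall>i\<in>I. \<forall>i'\<in>I. \<forall>i''\<in>I. le i i' \<and> le i' i'' \<longrightarrow>
        (\<forall>a\<in>M i. R i'' i'' (emb i' i'' (emb i i' a)) (emb i i'' a)))"
  unfolding cons_embeddings_def rel_hom_def Pi_iff by simp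

lemma cons_projections_iff:
  "cons_projections I le M R proj \<longleftrightarrow>
     (\<forall>i\<in>I. \<forall>i'\<in>I. le i i' \<longrightarrow> state_map i' i (proj i' i)) \<and>
     (\<forall>i\<in>I. \<forall>a\<in>M i. R i i (proj i i a) a) \<and>
     (\<forall>i\<in>I. \<forall>i'\<in>I. \<forall>i''\<in>I. le i i' \<and> le i' i'' \<longrightarrow>
        (\<forall>a\<in>M i''. R i i (proj i' i (proj i'' i' a)) (proj i'' i a)))"
  unfolding cons_projections_def rel_hom_def Pi_iff by simp

lemma emb_proj_pair_iff:
  "emb_proj_pair I le M R emb proj \<longleftrightarrow>
     cons_embeddings I le M R emb \<and> cons_projections I le M R proj \<and>
     (\<forall>i\<in>I. \<forall>i'\<in>I. le i i' \<longrightarrow> (\<forall>a\<in>M i. R i i (proj i' i (emb i i' a)) a))"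
  unfolding emb_proj_pair_def by simp

lemma cons_embeddings_state_map:
  "cons_embeddings I le M R emb \<Longrightarrow> i \<in> I \<Longrightarrow> i' \<in> I \<Longrightarrow> le i i' \<Longrightarrow> state_map i i' (emb i i')"
  unfolding cons_embeddings_iff by blast

lemma cons_projections_state_map:
  "cons_projections I le M R proj \<Longrightarrow> i \<in> I \<Longrightarrow> i' \<in> I \<Longrightarrow> le i i' \<Longrightarrow> state_map i' i (proj i' i)"
  unfolding cons_projections_iff by blast

lemma direct_system_iff:
  "direct_system I le M R \<longleftrightarrow>
     (\<exists>emb. cons_embeddings I le M R emb \<and> coherent_embeddings I le M R emb \<and>
        (\<forall>i\<in>I. \<forall>i'\<in>I. le i i' \<longrightarrow> (\<forall>a'\<in>M i'. \<forall>a\<in>M i.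
           R i' i a' a \<longleftrightarrow> R i' i' a' (emb i i' a))))"
  unfolding direct_system_def using prefactor_system by simp

lemma inverse_system_iff:
  "inverse_system I le M R \<longleftrightarrow>
     (\<exists>proj. cons_projections I le M R proj \<and> coherent_projections I le M R proj \<and>
        (\<forall>i\<in>I. \<forall>i'\<in>I. le i i' \<longrightarrow> (\<forall>a'\<in>M i'. \<forall>a\<in>M i.
           R i' i a' a \<longleftrightarrow> R i i (proj i' i a') a)))"
  unfolding inverse_system_def using prefactor_system by simp

end

text \<open>The conjugations are restricted to the new domain so that they stay extensional.\<close>

fun fs_emb :: "('i \<Rightarrow> 'a set) \<Rightarrow> ('i \<Rightarrow> 'i \<Rightarrow> 'a \<Rightarrow> 'a) \<Rightarrow> ('j \<Rightarrow> 'j \<Rightarrow> 'b \<Rightarrow> 'b)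
    \<Rightarrow> 'i \<times> 'j \<Rightarrow> 'i \<times> 'j \<Rightarrow> ('a \<Rightarrow> 'b) \<Rightarrow> 'a \<Rightarrow> 'b" where
  "fs_emb M proj emb (i, j) (i', j') f = (\<lambda>a\<in>M i'. emb j j' (f (proj i' i a)))"

fun fs_proj :: "('i \<Rightarrow> 'a set) \<Rightarrow> ('i \<Rightarrow> 'i \<Rightarrow> 'a \<Rightarrow> 'a) \<Rightarrow> ('j \<Rightarrow> 'j \<Rightarrow> 'b \<Rightarrow> 'b)
    \<Rightarrow> 'i \<times> 'j \<Rightarrow> 'i \<times> 'j \<Rightarrow> ('a \<Rightarrow> 'b) \<Rightarrow> 'a \<Rightarrow> 'b" where
  "fs_proj M emb proj (i', j') (i, j) f = (\<lambda>a\<in>M i. proj j' j (f (emb i i' a)))"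

lemma fs_le_Pair [simp]: "fs_le leI leJ (i, j) (i', j') \<longleftrightarrow> leI i i' \<and> leJ j j'"
  by (simp add: fs_le_def)

locale fun_space = M: prefactor I leI M R + N: prefactor J leJ N S
  for I :: "'i set" and leI M R and J :: "'j set" and leJ N S
begin

abbreviation "F \<equiv> fs_states I leI M R J leJ N S"
abbreviation "RF \<equiv> fs_rel I leI M R J leJ N S"
abbreviation "LE \<equiv> fs_le leI leJ"

lemma fs_states_iff: "f \<in> F (i, j) \<longleftrightarrow> f \<in> extensional (M i) \<and> rel_hom (M i) (R i i) (N j) (S j j) f"
  unfolding fs_states_def rel_hom_def PiE_def by auto

lemma fs_states_apply: "f \<in> F (i, j) \<Longrightarrow> a \<in> M i \<Longrightarrow> f a \<in> N j"
  unfolding fs_states_iff rel_hom_def by blast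

lemma fs_states_rel: "f \<in> F (i, j) \<Longrightarrow> R i i a b \<Longrightarrow> S j j (f a) (f b)"
  unfolding fs_states_iff rel_hom_def using M.rel_dom by blast

lemma fs_rel_iff:
  "RF (i', j') (i, j) f' f \<longleftrightarrow> i' \<in> I \<and> j' \<in> J \<and> i \<in> I \<and> j \<in> J \<and> leI i i' \<and> leJ j j'
     \<and> f' \<in> F (i', j') \<and> f \<in> F (i, j) \<and> (\<forall>a' a. R i' i a' a \<longrightarrow> S j' j (f' a') (f a))"
  unfolding fs_rel_def using M.rel_dom by auto

lemma fs_relI:
  assumes "i' \<in> I" "j' \<in> J" "i \<in> I" "j \<in> J" "leI i i'" "leJ j j'" "f' \<in> F (i', j')" "f \<in> F (i, j)"
    and "\<And>a' a. R i' i a' a \<Longrightarrow> S j' j (f' a') (f a)"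
  shows "RF (i', j') (i, j) f' f"
  using assms unfolding fs_rel_iff by blast

lemma fs_relD: "RF (i', j') (i, j) f' f \<Longrightarrow> R i' i a' a \<Longrightarrow> S j' j (f' a') (f a)"
  unfolding fs_rel_iff by blast

lemma directed_preorder_fs: "directed_preorder (I \<times> J) LE"
  unfolding directed_preorder_def
proof (intro conjI ballI impI)
  show "I \<times> J \<noteq> {}"
    using M.nonempty N.nonempty by blast
next
  fix p assume "p \<in> I \<times> J"
  then show "LE p p"
    using M.le_refl N.le_refl by (cases p) auto
next
  fix p q r assume "p \<in> I \<times> J" "q \<in> I \<times> J" "r \<in> I \<times> J" "LE p q \<and> LE q r"
  then show "LE p r"
    using M.le_trans N.le_trans by (cases p; cases q; cases r) (auto simp del: fs_le_Pair simp: fs_le_def)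
next
  fix p q assume "p \<in> I \<times> J" "q \<in> I \<times> J"
  then show "\<exists>r\<in>I \<times> J. LE p r \<and> LE q r"
    using M.directed N.directed by (cases p; cases q) fastforce
qed

lemma is_system_fs: "is_system (I \<times> J) LE F RF"
proof -
  have "RF p p f f" if "p \<in> I \<times> J" "f \<in> F p" for p f
    using that M.le_refl N.le_refl fs_states_rel by (cases p) (auto simp: fs_rel_iff)
  then show ?thesis
    using directed_preorder_fs unfolding is_system_def fs_rel_def by blast
qed

lemma prefactor_system_fs:
  assumes coh: "coherent_embeddings I leI M R emb"
  shows "prefactor_system (I \<times> J) LE F RF"
  unfolding prefactor_system_def split_paired_Ball_Sigma fs_le_Pair
proof (intro conjI ballI impI is_system_fs)
  fix i j i' j' f' f
  assume idx: "i \<in> I" "j \<in> J" "i' \<in> I" "j' \<in> J" "leI i i' \<and> leJ j j'"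
    and states: "f' \<in> F (i', j')" "f \<in> F (i, j)"
  show "consistent (I \<times> J) LE F RF (i', j') f' (i, j) f \<longleftrightarrow> RF (i', j') (i, j) f' f"
  proof
    assume "RF (i', j') (i, j) f' f"
    moreover have "RF (i', j') (i', j') f' f'"
      using is_system_fs idx states unfolding is_system_def by blast
    ultimately show "consistent (I \<times> J) LE F RF (i', j') f' (i, j) f"
      unfolding consistent_def using idx states M.le_refl N.le_refl by fastforce
  next
    assume "consistent (I \<times> J) LE F RF (i', j') f' (i, j) f"
    then obtain k l g where kl: "k \<in> I" "l \<in> J" "leI i' k" and
      g: "RF (k, l) (i', j') g f'" "RF (k, l) (i, j) g f"
      unfolding consistent_def by (auto simp: fs_rel_iff)
    show "RF (i', j') (i, j) f' f"
    proof (rule fs_relI)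
      fix a' a assume "R i' i a' a"
      then have "R k i' (emb i' k a') a'" "R k i (emb i' k a') a"
        using M.coherent_embeddingsD[OF coh] M.rel_refl M.rel_dom kl by blast+
      then have "S l j' (g (emb i' k a')) (f' a')" "S l j (g (emb i' k a')) (f a)"
        using g fs_relD by blast+
      then have "consistent J leJ N S j' (f' a') j (f a)"
        unfolding consistent_def using N.rel_dom by blast
      then show "S j' j (f' a') (f a)"
        using N.consistent_iff_rel N.rel_dom \<open>S l j (g (emb i' k a')) (f a)\<close>
          \<open>S l j' (g (emb i' k a')) (f' a')\<close> idx by blast
    qed (use idx states in auto)
  qed
qed

lemma restrict_comp_in_fs_states:
  assumes "f \<in> F (i, j)" "M.state_map i' i \<psi>" "N.state_map j j' \<phi>"
  shows "(\<lambda>a\<in>M i'. \<phi> (f (\<psi> a))) \<in> F (i', j')"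
proof -
  have f: "rel_hom (M i) (R i i) (N j) (S j j) f"
    using assms(1) fs_states_iff by blast
  show ?thesis
    using rel_hom_restrict[OF rel_hom_comp[OF rel_hom_comp[OF assms(2) f] assms(3)]]
    by (simp add: fs_states_iff)
qed

lemma fs_rel_restrict_comp:
  assumes fg: "RF (i, j) (i, j) f g" and idx: "i' \<in> I" "j' \<in> J"
    and \<psi>: "M.state_map i' i \<psi>" "M.state_map i' i \<psi>'" "\<And>a. a \<in> M i' \<Longrightarrow> R i i (\<psi> a) (\<psi>' a)"
    and \<phi>: "N.state_map j j' \<phi>" "N.state_map j j' \<phi>'" "\<And>b. b \<in> N j \<Longrightarrow> S j' j' (\<phi> b) (\<phi>' b)"
  shows "RF (i', j') (i', j') (\<lambda>a\<in>M i'. \<phi> (f (\<psi> a))) (\<lambda>a\<in>M i'. \<phi>' (g (\<psi>' a)))"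
proof (rule fs_relI)
  have states: "f \<in> F (i, j)" "g \<in> F (i, j)"
    using fg by (auto simp: fs_rel_iff)
  then show "(\<lambda>a\<in>M i'. \<phi> (f (\<psi> a))) \<in> F (i', j')" "(\<lambda>a\<in>M i'. \<phi>' (g (\<psi>' a))) \<in> F (i', j')"
    using restrict_comp_in_fs_states \<psi> \<phi> by blast+
  fix a b assume ab: "R i' i' a b"
  then have "a \<in> M i'" "b \<in> M i'"
    using M.rel_dom by blast+
  then have "R i i (\<psi> a) (\<psi>' b)"
    using M.rel_trans ab \<psi> unfolding rel_hom_def by blast
  then have "S j j (f (\<psi> a)) (g (\<psi>' b))"
    using fg fs_relD by blast
  then have "S j' j' (\<phi> (f (\<psi> a))) (\<phi>' (g (\<psi>' b)))"
    using N.rel_trans N.rel_dom \<phi> unfolding rel_hom_def by blast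
  then show "S j' j' ((\<lambda>a\<in>M i'. \<phi> (f (\<psi> a))) a) ((\<lambda>a\<in>M i'. \<phi>' (g (\<psi>' a))) b)"
    using \<open>a \<in> M i'\<close> \<open>b \<in> M i'\<close> by simp
qed (use idx M.le_refl N.le_refl in auto)

lemma rel_hom_restrict_comp:
  assumes "M.state_map i' i \<psi>" "N.state_map j j' \<phi>" "i' \<in> I" "j' \<in> J"
  shows "rel_hom (F (i, j)) (RF (i, j) (i, j)) (F (i', j')) (RF (i', j') (i', j'))
    (\<lambda>f. \<lambda>a\<in>M i'. \<phi> (f (\<psi> a)))"
  unfolding rel_hom_def
proof (intro conjI ballI impI funcsetI)
  show "(\<lambda>a\<in>M i'. \<phi> (f (\<psi> a))) \<in> F (i', j')" if "f \<in> F (i, j)" for f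
    using restrict_comp_in_fs_states that assms by blast
next
  fix f g assume fg: "RF (i, j) (i, j) f g"
  then have "i \<in> I" "j \<in> J"
    by (auto simp: fs_rel_iff)
  then have "R i i (\<psi> a) (\<psi> a)" if "a \<in> M i'" for a
    using M.rel_refl assms(1) that unfolding rel_hom_def by blast
  moreover have "S j' j' (\<phi> b) (\<phi> b)" if "b \<in> N j" for b
    using N.rel_refl assms(2) that \<open>j' \<in> J\<close> unfolding rel_hom_def by blast
  ultimately show "RF (i', j') (i', j') (\<lambda>a\<in>M i'. \<phi> (f (\<psi> a))) (\<lambda>a\<in>M i'. \<phi> (g (\<psi> a)))"
    by (rule fs_rel_restrict_comp[OF fg assms(3,4,1,1) _ assms(2,2)])
qed

lemma fs_rel_restrict_comp_id:
  assumes "f \<in> F (i, j)" "i \<in> I" "j \<in> J" "M.state_map i i \<psi>" "\<And>a. a \<in> M i \<Longrightarrow> R i i (\<psi> a) a"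
    and "N.state_map j j \<phi>" "\<And>b. b \<in> N j \<Longrightarrow> S j j (\<phi> b) b"
  shows "RF (i, j) (i, j) (\<lambda>a\<in>M i. \<phi> (f (\<psi> a))) f"
proof -
  have "RF (i, j) (i, j) f f"
    using is_system_fs assms(1-3) unfolding is_system_def by blast
  then have "RF (i, j) (i, j) (\<lambda>a\<in>M i. \<phi> (f (\<psi> a))) (\<lambda>a\<in>M i. f a)"
    by (rule fs_rel_restrict_comp[OF _ assms(2,3,4) rel_hom_id assms(5,6) rel_hom_id assms(7)])
  then show ?thesis
    using assms(1) by (simp add: fs_states_iff extensional_restrict)
qed

text \<open>This single shape covers the composition laws of both conjugation families as well as the
  embedding-projection pair condition.\<close>

lemma fs_rel_restrict_comp_restrict:
  assumes "f \<in> F (i, j)" "i \<in> I" "j \<in> J" "i'' \<in> I" "j'' \<in> J"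
    and "M.state_map i' i \<psi>\<^sub>1" "M.state_map i'' i' \<psi>\<^sub>2" "M.state_map i'' i \<psi>\<^sub>3"
    "\<And>a. a \<in> M i'' \<Longrightarrow> R i i (\<psi>\<^sub>1 (\<psi>\<^sub>2 a)) (\<psi>\<^sub>3 a)"
    and "N.state_map j j' \<phi>\<^sub>1" "N.state_map j' j'' \<phi>\<^sub>2" "N.state_map j j'' \<phi>\<^sub>3"
    "\<And>b. b \<in> N j \<Longrightarrow> S j'' j'' (\<phi>\<^sub>2 (\<phi>\<^sub>1 b)) (\<phi>\<^sub>3 b)"
  shows "RF (i'', j'') (i'', j'') (\<lambda>a\<in>M i''. \<phi>\<^sub>2 ((\<lambda>a\<in>M i'. \<phi>\<^sub>1 (f (\<psi>\<^sub>1 a))) (\<psi>\<^sub>2 a)))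
    (\<lambda>a\<in>M i''. \<phi>\<^sub>3 (f (\<psi>\<^sub>3 a)))"
proof -
  have "RF (i, j) (i, j) f f"
    using is_system_fs assms(1-3) unfolding is_system_def by blast
  then have "RF (i'', j'') (i'', j'') (\<lambda>a\<in>M i''. \<phi>\<^sub>2 (\<phi>\<^sub>1 (f (\<psi>\<^sub>1 (\<psi>\<^sub>2 a)))))
      (\<lambda>a\<in>M i''. \<phi>\<^sub>3 (f (\<psi>\<^sub>3 a)))"
    using fs_rel_restrict_comp[where \<psi> = "\<lambda>a. \<psi>\<^sub>1 (\<psi>\<^sub>2 a)" and \<phi> = "\<lambda>b. \<phi>\<^sub>2 (\<phi>\<^sub>1 b)"]
      rel_hom_comp[OF assms(7,6)] rel_hom_comp[OF assms(10,11)] assms by blast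
  moreover have "\<psi>\<^sub>2 \<in> M i'' \<rightarrow> M i'"
    using assms(7) unfolding rel_hom_def by blast
  ultimately show ?thesis
    by (simp only: restrict_comp_restrict)
qed

lemma coherent_embeddings_fs_emb:
  assumes "cons_projections I leI M R proj" "coherent_projections I leI M R proj"
    and "cons_embeddings J leJ N S emb" "coherent_embeddings J leJ N S emb"
  shows "coherent_embeddings (I \<times> J) LE F RF (fs_emb M proj emb)"
  unfolding coherent_embeddings_def split_paired_Ball_Sigma fs_le_Pair fs_emb.simps
proof (intro ballI impI)
  fix i j i' j' i'' j'' g f
  assume idx: "i \<in> I" "j \<in> J" "i' \<in> I" "j' \<in> J" "i'' \<in> I" "j'' \<in> J"
    "(leI i i' \<and> leJ j j') \<and> leI i' i'' \<and> leJ j' j''"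
    and "g \<in> F (i', j')" "f \<in> F (i, j)" "RF (i', j') (i, j) g f"
  show "RF (i'', j'') (i, j) (\<lambda>a\<in>M i''. emb j' j'' (g (proj i'' i' a))) f"
  proof (rule fs_relI)
    fix a'' a assume "R i'' i a'' a"
    then have "R i' i (proj i'' i' a'') a" and "a'' \<in> M i''"
      using M.coherent_projectionsD[OF assms(2)] idx M.rel_dom by blast+
    then show "S j'' j ((\<lambda>a\<in>M i''. emb j' j'' (g (proj i'' i' a))) a'') (f a)"
      using N.coherent_embeddingsD[OF assms(4)] idx fs_relD[OF \<open>RF (i', j') (i, j) g f\<close>] by simp
  next
    show "(\<lambda>a\<in>M i''. emb j' j'' (g (proj i'' i' a))) \<in> F (i'', j'')"
      using restrict_comp_in_fs_states[OF \<open>g \<in> F (i', j')\<close>] idx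
        M.cons_projections_state_map[OF assms(1)] N.cons_embeddings_state_map[OF assms(3)] by blast
  qed (use idx \<open>f \<in> F (i, j)\<close> M.le_trans N.le_trans in blast)+
qed

lemma coherent_projections_fs_proj:
  assumes "cons_embeddings I leI M R emb" "coherent_embeddings I leI M R emb"
    and "cons_projections J leJ N S proj" "coherent_projections J leJ N S proj"
  shows "coherent_projections (I \<times> J) LE F RF (fs_proj M emb proj)"
  unfolding coherent_projections_def split_paired_Ball_Sigma fs_le_Pair fs_proj.simps
proof (intro ballI impI)
  fix i j i' j' i'' j'' h f
  assume idx: "i \<in> I" "j \<in> J" "i' \<in> I" "j' \<in> J" "i'' \<in> I" "j'' \<in> J"
    "(leI i i' \<and> leJ j j') \<and> leI i' i'' \<and> leJ j' j''"
    and "h \<in> F (i'', j'')" "f \<in> F (i, j)" "RF (i'', j'') (i, j) h f"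
  show "RF (i', j') (i, j) (\<lambda>a\<in>M i'. proj j'' j' (h (emb i' i'' a))) f"
  proof (rule fs_relI)
    fix a' a assume "R i' i a' a"
    then have "R i'' i (emb i' i'' a') a" and "a' \<in> M i'"
      using M.coherent_embeddingsD[OF assms(2)] idx M.rel_dom by blast+
    then show "S j' j ((\<lambda>a\<in>M i'. proj j'' j' (h (emb i' i'' a))) a') (f a)"
      using N.coherent_projectionsD[OF assms(4)] idx fs_relD[OF \<open>RF (i'', j'') (i, j) h f\<close>] by simp
  next
    show "(\<lambda>a\<in>M i'. proj j'' j' (h (emb i' i'' a))) \<in> F (i', j')"
      using restrict_comp_in_fs_states[OF \<open>h \<in> F (i'', j'')\<close>] idx
        M.cons_embeddings_state_map[OF assms(1)] N.cons_projections_state_map[OF assms(3)] by blast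
  qed (use idx \<open>f \<in> F (i, j)\<close> in blast)+
qed

lemma fs_rel_iff_fs_emb:
  assumes proj: "cons_projections I leI M R proj"
    and proj_inverse: "\<And>i i' a' a. i \<in> I \<Longrightarrow> i' \<in> I \<Longrightarrow> leI i i' \<Longrightarrow> a' \<in> M i' \<Longrightarrow> a \<in> M i \<Longrightarrow>
      R i' i a' a \<longleftrightarrow> R i i (proj i' i a') a"
    and emb: "cons_embeddings J leJ N S emb"
    and emb_direct: "\<And>j j' b' b. j \<in> J \<Longrightarrow> j' \<in> J \<Longrightarrow> leJ j j' \<Longrightarrow> b' \<in> N j' \<Longrightarrow> b \<in> N j \<Longrightarrow>
      S j' j b' b \<longleftrightarrow> S j' j' b' (emb j j' b)"
    and idx: "i \<in> I" "i' \<in> I" "j \<in> J" "j' \<in> J" "leI i i'" "leJ j j'"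
    and states: "f' \<in> F (i', j')" "f \<in> F (i, j)"
  shows "RF (i', j') (i, j) f' f \<longleftrightarrow> RF (i', j') (i', j') f' (fs_emb M proj emb (i, j) (i', j') f)"
proof -
  have \<psi>: "M.state_map i' i (proj i' i)" and \<phi>: "N.state_map j j' (emb j j')"
    using M.cons_projections_state_map[OF proj] N.cons_embeddings_state_map[OF emb] idx by blast+
  have emb_f: "fs_emb M proj emb (i, j) (i', j') f \<in> F (i', j')"
    using restrict_comp_in_fs_states[OF states(2) \<psi> \<phi>] by simp
  show ?thesis
  proof
    assume f'f: "RF (i', j') (i, j) f' f"
    show "RF (i', j') (i', j') f' (fs_emb M proj emb (i, j) (i', j') f)"
    proof (rule fs_relI)
      fix a' a assume "R i' i' a' a"
      then have "a' \<in> M i'" "a \<in> M i'" "R i i (proj i' i a') (proj i' i a)" "proj i' i a \<in> M i"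
        using M.rel_dom \<psi> unfolding rel_hom_def by blast+
      then have "S j' j (f' a') (f (proj i' i a))"
        using proj_inverse idx fs_relD[OF f'f] by blast
      then show "S j' j' (f' a') (fs_emb M proj emb (i, j) (i', j') f a)"
        using emb_direct idx fs_states_apply states \<open>a' \<in> M i'\<close> \<open>a \<in> M i'\<close> \<open>proj i' i a \<in> M i\<close> by simp
    qed (use idx states emb_f M.le_refl N.le_refl in auto)
  next
    assume f'_emb_f: "RF (i', j') (i', j') f' (fs_emb M proj emb (i, j) (i', j') f)"
    show "RF (i', j') (i, j) f' f"
    proof (rule fs_relI)
      fix a' a assume "R i' i a' a"
      then have "a' \<in> M i'" "a \<in> M i" "R i i (proj i' i a') a" "proj i' i a' \<in> M i"
        using M.rel_dom proj_inverse \<psi> idx unfolding rel_hom_def by blast+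
      then have "S j' j' (emb j j' (f (proj i' i a'))) (emb j j' (f a))"
        using fs_states_rel[OF states(2)] \<phi> fs_states_apply[OF states(2)] unfolding rel_hom_def by blast
      moreover have "S j' j' (f' a') (emb j j' (f (proj i' i a')))"
        using fs_relD[OF f'_emb_f M.rel_refl[OF idx(2) \<open>a' \<in> M i'\<close>]] \<open>a' \<in> M i'\<close> by simp
      ultimately show "S j' j (f' a') (f a)"
        using N.rel_trans emb_direct idx fs_states_apply states \<open>a' \<in> M i'\<close> \<open>a \<in> M i\<close> by blast
    qed (use idx states in auto)
  qed
qed

lemma fs_rel_iff_fs_proj:
  assumes emb: "cons_embeddings I leI M R emb"
    and emb_direct: "\<And>i i' a' a. i \<in> I \<Longrightarrow> i' \<in> I \<Longrightarrow> leI i i' \<Longrightarrow> a' \<in> M i' \<Longrightarrow> a \<in> M i \<Longrightarrow>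
      R i' i a' a \<longleftrightarrow> R i' i' a' (emb i i' a)"
    and proj: "cons_projections J leJ N S proj"
    and proj_inverse: "\<And>j j' b' b. j \<in> J \<Longrightarrow> j' \<in> J \<Longrightarrow> leJ j j' \<Longrightarrow> b' \<in> N j' \<Longrightarrow> b \<in> N j \<Longrightarrow>
      S j' j b' b \<longleftrightarrow> S j j (proj j' j b') b"
    and idx: "i \<in> I" "i' \<in> I" "j \<in> J" "j' \<in> J" "leI i i'" "leJ j j'"
    and states: "f' \<in> F (i', j')" "f \<in> F (i, j)"
  shows "RF (i', j') (i, j) f' f \<longleftrightarrow> RF (i, j) (i, j) (fs_proj M emb proj (i', j') (i, j) f') f"
proof -
  have \<psi>: "M.state_map i i' (emb i i')" and \<phi>: "N.state_map j' j (proj j' j)"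
    using M.cons_embeddings_state_map[OF emb] N.cons_projections_state_map[OF proj] idx by blast+
  have proj_f': "fs_proj M emb proj (i', j') (i, j) f' \<in> F (i, j)"
    using restrict_comp_in_fs_states[OF states(1) \<psi> \<phi>] by simp
  show ?thesis
  proof
    assume f'f: "RF (i', j') (i, j) f' f"
    show "RF (i, j) (i, j) (fs_proj M emb proj (i', j') (i, j) f') f"
    proof (rule fs_relI)
      fix a' a assume "R i i a' a"
      then have "a' \<in> M i" "a \<in> M i" "R i' i' (emb i i' a') (emb i i' a)" "emb i i' a' \<in> M i'"
        using M.rel_dom \<psi> unfolding rel_hom_def by blast+
      then have "S j' j (f' (emb i i' a')) (f a)"
        using emb_direct idx fs_relD[OF f'f] by blast
      then show "S j j (fs_proj M emb proj (i', j') (i, j) f' a') (f a)"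
        using proj_inverse idx fs_states_apply states \<open>a' \<in> M i\<close> \<open>a \<in> M i\<close> \<open>emb i i' a' \<in> M i'\<close> by simp
    qed (use idx states proj_f' M.le_refl N.le_refl in auto)
  next
    assume proj_f'_f: "RF (i, j) (i, j) (fs_proj M emb proj (i', j') (i, j) f') f"
    show "RF (i', j') (i, j) f' f"
    proof (rule fs_relI)
      fix a' a assume "R i' i a' a"
      then have "a' \<in> M i'" "a \<in> M i" "R i' i' a' (emb i i' a)" "emb i i' a \<in> M i'"
        using M.rel_dom emb_direct \<psi> idx unfolding rel_hom_def by blast+
      then have "S j j (proj j' j (f' a')) (proj j' j (f' (emb i i' a)))"
        using fs_states_rel[OF states(1)] \<phi> fs_states_apply[OF states(1)] unfolding rel_hom_def by blast
      moreover have "S j j (proj j' j (f' (emb i i' a))) (f a)"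
        using fs_relD[OF proj_f'_f M.rel_refl[OF idx(1) \<open>a \<in> M i\<close>]] \<open>a \<in> M i\<close> by simp
      ultimately show "S j' j (f' a') (f a)"
        using N.rel_trans proj_inverse idx fs_states_apply states \<open>a' \<in> M i'\<close> \<open>a \<in> M i\<close> by blast
    qed (use idx states in auto)
  qed
qed

end

text \<open>The assumption is discharged by \<open>prefactor_system_fs\<close>; the locale makes the lemmas on
  prefactor systems available for the function space itself.\<close>

locale prefactor_fun_space = fun_space +
  assumes prefactor_system_fs: "prefactor_system (I \<times> J) (fs_le leI leJ)
    (fs_states I leI M R J leJ N S) (fs_rel I leI M R J leJ N S)"
begin

sublocale F: prefactor "I \<times> J" LE F RF
  by (rule prefactor.intro, rule prefactor_system_fs)

lemma cons_embeddings_fs_emb: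
  assumes proj: "cons_projections I leI M R proj" and emb: "cons_embeddings J leJ N S emb"
  shows "cons_embeddings (I \<times> J) LE F RF (fs_emb M proj emb)"
  unfolding F.cons_embeddings_iff split_paired_Ball_Sigma fs_le_Pair fs_emb.simps
proof (intro conjI ballI impI)
  fix i j i' j' assume "i \<in> I" "j \<in> J" "i' \<in> I" "j' \<in> J" "leI i i' \<and> leJ j j'"
  then show "rel_hom (F (i, j)) (RF (i, j) (i, j)) (F (i', j')) (RF (i', j') (i', j'))
      (\<lambda>f. \<lambda>a\<in>M i'. emb j j' (f (proj i' i a)))"
    using rel_hom_restrict_comp M.cons_projections_state_map[OF proj] N.cons_embeddings_state_map[OF emb]
    by blast
next
  fix i j f assume "i \<in> I" "j \<in> J" "f \<in> F (i, j)"
  then show "RF (i, j) (i, j) (\<lambda>a\<in>M i. emb j j (f (proj i i a))) f"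
    using proj emb M.le_refl N.le_refl unfolding M.cons_projections_iff N.cons_embeddings_iff
    by (intro fs_rel_restrict_comp_id) auto
next
  fix i j i' j' i'' j'' f
  assume "i \<in> I" "j \<in> J" "i' \<in> I" "j' \<in> J" "i'' \<in> I" "j'' \<in> J"
    "(leI i i' \<and> leJ j j') \<and> leI i' i'' \<and> leJ j' j''" "f \<in> F (i, j)"
  moreover from this have "leI i i''" "leJ j j''"
    using M.le_trans N.le_trans by blast+
  ultimately show "RF (i'', j'') (i'', j'')
      (\<lambda>a\<in>M i''. emb j' j'' ((\<lambda>a\<in>M i'. emb j j' (f (proj i' i a))) (proj i'' i' a)))
      (\<lambda>a\<in>M i''. emb j j'' (f (proj i'' i a)))"
    using proj emb unfolding M.cons_projections_iff N.cons_embeddings_iff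
    by (intro fs_rel_restrict_comp_restrict[where i = i and j = j and \<psi>\<^sub>1 = "proj i' i" and \<psi>\<^sub>2 = "proj i'' i'"
          and \<psi>\<^sub>3 = "proj i'' i" and \<phi>\<^sub>1 = "emb j j'" and \<phi>\<^sub>2 = "emb j' j''" and \<phi>\<^sub>3 = "emb j j''"]) auto
qed

lemma cons_projections_fs_proj:
  assumes emb: "cons_embeddings I leI M R emb" and proj: "cons_projections J leJ N S proj"
  shows "cons_projections (I \<times> J) LE F RF (fs_proj M emb proj)"
  unfolding F.cons_projections_iff split_paired_Ball_Sigma fs_le_Pair fs_proj.simps
proof (intro conjI ballI impI)
  fix i j i' j' assume "i \<in> I" "j \<in> J" "i' \<in> I" "j' \<in> J" "leI i i' \<and> leJ j j'"
  then show "rel_hom (F (i', j')) (RF (i', j') (i', j')) (F (i, j)) (RF (i, j) (i, j))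
      (\<lambda>f. \<lambda>a\<in>M i. proj j' j (f (emb i i' a)))"
    using rel_hom_restrict_comp M.cons_embeddings_state_map[OF emb] N.cons_projections_state_map[OF proj]
    by blast
next
  fix i j f assume "i \<in> I" "j \<in> J" "f \<in> F (i, j)"
  then show "RF (i, j) (i, j) (\<lambda>a\<in>M i. proj j j (f (emb i i a))) f"
    using emb proj M.le_refl N.le_refl unfolding M.cons_embeddings_iff N.cons_projections_iff
    by (intro fs_rel_restrict_comp_id) auto
next
  fix i j i' j' i'' j'' f
  assume "i \<in> I" "j \<in> J" "i' \<in> I" "j' \<in> J" "i'' \<in> I" "j'' \<in> J"
    "(leI i i' \<and> leJ j j') \<and> leI i' i'' \<and> leJ j' j''" "f \<in> F (i'', j'')"
  moreover from this have "leI i i''" "leJ j j''"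
    using M.le_trans N.le_trans by blast+
  ultimately show "RF (i, j) (i, j)
      (\<lambda>a\<in>M i. proj j' j ((\<lambda>a\<in>M i'. proj j'' j' (f (emb i' i'' a))) (emb i i' a)))
      (\<lambda>a\<in>M i. proj j'' j (f (emb i i'' a)))"
    using emb proj unfolding M.cons_embeddings_iff N.cons_projections_iff
    by (intro fs_rel_restrict_comp_restrict[where i = i'' and j = j'' and \<psi>\<^sub>1 = "emb i' i''" and \<psi>\<^sub>2 = "emb i i'"
          and \<psi>\<^sub>3 = "emb i i''" and \<phi>\<^sub>1 = "proj j'' j'" and \<phi>\<^sub>2 = "proj j' j" and \<phi>\<^sub>3 = "proj j'' j"]) auto
qed

lemma emb_proj_pair_fs:
  assumes "emb_proj_pair I leI M R emb\<^sub>M proj\<^sub>M" "emb_proj_pair J leJ N S emb\<^sub>N proj\<^sub>N"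
  shows "emb_proj_pair (I \<times> J) LE F RF (fs_emb M proj\<^sub>M emb\<^sub>N) (fs_proj M emb\<^sub>M proj\<^sub>N)"
  unfolding F.emb_proj_pair_iff split_paired_Ball_Sigma fs_le_Pair fs_emb.simps fs_proj.simps
proof (intro conjI ballI impI)
  show "cons_embeddings (I \<times> J) LE F RF (fs_emb M proj\<^sub>M emb\<^sub>N)"
    "cons_projections (I \<times> J) LE F RF (fs_proj M emb\<^sub>M proj\<^sub>N)"
    using assms cons_embeddings_fs_emb cons_projections_fs_proj unfolding emb_proj_pair_def by blast+
next
  fix i j i' j' f assume "i \<in> I" "j \<in> J" "i' \<in> I" "j' \<in> J" "leI i i' \<and> leJ j j'" "f \<in> F (i, j)"
  then have "RF (i, j) (i, j)
      (\<lambda>a\<in>M i. proj\<^sub>N j' j ((\<lambda>a\<in>M i'. emb\<^sub>N j j' (f (proj\<^sub>M i' i a))) (emb\<^sub>M i i' a))) (\<lambda>a\<in>M i. f a)"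
    using assms M.le_refl N.le_refl
    unfolding M.emb_proj_pair_iff N.emb_proj_pair_iff M.cons_embeddings_iff N.cons_embeddings_iff
      M.cons_projections_iff N.cons_projections_iff
    by (intro fs_rel_restrict_comp_restrict[where i = i and j = j and \<psi>\<^sub>1 = "proj\<^sub>M i' i" and \<psi>\<^sub>2 = "emb\<^sub>M i i'"
          and \<psi>\<^sub>3 = "\<lambda>a. a" and \<phi>\<^sub>1 = "emb\<^sub>N j j'" and \<phi>\<^sub>2 = "proj\<^sub>N j' j" and \<phi>\<^sub>3 = "\<lambda>b. b"]) (auto simp: rel_hom_id)
  then show "RF (i, j) (i, j)
      (\<lambda>a\<in>M i. proj\<^sub>N j' j ((\<lambda>a\<in>M i'. emb\<^sub>N j j' (f (proj\<^sub>M i' i a))) (emb\<^sub>M i i' a))) f"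
    using \<open>f \<in> F (i, j)\<close> by (simp add: fs_states_iff extensional_restrict)
qed

lemma factor_system_fs:
  assumes "factor_system I leI M R" "factor_system J leJ N S"
  shows "factor_system (I \<times> J) LE F RF"
proof -
  obtain emb\<^sub>M proj\<^sub>M where M: "emb_proj_pair I leI M R emb\<^sub>M proj\<^sub>M"
    "coherent_embeddings I leI M R emb\<^sub>M" "coherent_projections I leI M R proj\<^sub>M"
    using assms(1) unfolding factor_system_def by blast
  obtain emb\<^sub>N proj\<^sub>N where N: "emb_proj_pair J leJ N S emb\<^sub>N proj\<^sub>N"
    "coherent_embeddings J leJ N S emb\<^sub>N" "coherent_projections J leJ N S proj\<^sub>N"
    using assms(2) unfolding factor_system_def by blast
  have "coherent_embeddings (I \<times> J) LE F RF (fs_emb M proj\<^sub>M emb\<^sub>N)"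
    "coherent_projections (I \<times> J) LE F RF (fs_proj M emb\<^sub>M proj\<^sub>N)"
    using coherent_embeddings_fs_emb coherent_projections_fs_proj M N unfolding emb_proj_pair_def by blast+
  then show ?thesis
    unfolding factor_system_def using prefactor_system_fs emb_proj_pair_fs[OF M(1) N(1)] by blast
qed

lemma cond_Fun_fs:
  assumes "cond_Fun J leJ N S"
  shows "cond_Fun (I \<times> J) LE F RF"
  unfolding cond_Fun_def split_paired_Ball_Sigma F.consistent_same_iff
proof (intro ballI conjI refl iffI)
  fix i j f g assume "i \<in> I" "j \<in> J" "f \<in> F (i, j)" "g \<in> F (i, j)" "RF (i, j) (i, j) f g"
  then have "f a = g a" if "a \<in> M i" for a
    using assms fs_relD M.rel_refl fs_states_apply that unfolding cond_Fun_def by blast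
  with \<open>f \<in> F (i, j)\<close> \<open>g \<in> F (i, j)\<close> show "f = g"
    unfolding fs_states_iff by (blast intro: extensionalityI)
next
  fix i j f g assume "i \<in> I" "j \<in> J" "f \<in> F (i, j)" "f = g"
  then show "RF (i, j) (i, j) f g"
    using F.rel_refl by blast
qed

lemma cond_Stab_fs:
  assumes "cond_Stab J leJ N S"
  shows "cond_Stab (I \<times> J) LE F RF"
  unfolding cond_Stab_def split_paired_Ball_Sigma fs_le_Pair F.consistent_same_iff
proof (intro ballI impI)
  fix i j i' j' h f g
  assume idx: "i \<in> I" "j \<in> J" "i' \<in> I" "j' \<in> J" "leI i i' \<and> leJ j j'"
    and states: "h \<in> F (i', j')" "f \<in> F (i, j)" "g \<in> F (i, j)"
    and rels: "RF (i', j') (i, j) h f \<and> RF (i, j) (i, j) f g"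
  show "RF (i', j') (i, j) h g"
  proof (rule fs_relI)
    fix a' a assume "R i' i a' a"
    then have "S j' j (h a') (f a)" "S j j (f a) (g a)" "a' \<in> M i'" "a \<in> M i"
      using rels fs_relD M.rel_refl M.rel_dom by blast+
    then show "S j' j (h a') (g a)"
      using assms idx states fs_states_apply N.consistent_same_iff unfolding cond_Stab_def by blast
  qed (use idx states in auto)
qed

lemma direct_system_fs:
  assumes "inverse_system I leI M R" "direct_system J leJ N S"
  shows "direct_system (I \<times> J) LE F RF"
proof -
  obtain proj where proj: "cons_projections I leI M R proj" "coherent_projections I leI M R proj"
    "\<And>i i' a' a. i \<in> I \<Longrightarrow> i' \<in> I \<Longrightarrow> leI i i' \<Longrightarrow> a' \<in> M i' \<Longrightarrow> a \<in> M i \<Longrightarrow>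
      R i' i a' a \<longleftrightarrow> R i i (proj i' i a') a"
    using assms(1) unfolding M.inverse_system_iff by blast
  obtain emb where emb: "cons_embeddings J leJ N S emb" "coherent_embeddings J leJ N S emb"
    "\<And>j j' b' b. j \<in> J \<Longrightarrow> j' \<in> J \<Longrightarrow> leJ j j' \<Longrightarrow> b' \<in> N j' \<Longrightarrow> b \<in> N j \<Longrightarrow>
      S j' j b' b \<longleftrightarrow> S j' j' b' (emb j j' b)"
    using assms(2) unfolding N.direct_system_iff by blast
  show ?thesis
    unfolding F.direct_system_iff
    using cons_embeddings_fs_emb[OF proj(1) emb(1)] coherent_embeddings_fs_emb[OF proj(1,2) emb(1,2)]
      fs_rel_iff_fs_emb[OF proj(1,3) emb(1,3)]
    by (intro exI[of _ "fs_emb M proj emb"]) (auto simp: split_paired_Ball_Sigma)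
qed

lemma inverse_system_fs:
  assumes "direct_system I leI M R" "inverse_system J leJ N S"
  shows "inverse_system (I \<times> J) LE F RF"
proof -
  obtain emb where emb: "cons_embeddings I leI M R emb" "coherent_embeddings I leI M R emb"
    "\<And>i i' a' a. i \<in> I \<Longrightarrow> i' \<in> I \<Longrightarrow> leI i i' \<Longrightarrow> a' \<in> M i' \<Longrightarrow> a \<in> M i \<Longrightarrow>
      R i' i a' a \<longleftrightarrow> R i' i' a' (emb i i' a)"
    using assms(1) unfolding M.direct_system_iff by blast
  obtain proj where proj: "cons_projections J leJ N S proj" "coherent_projections J leJ N S proj"
    "\<And>j j' b' b. j \<in> J \<Longrightarrow> j' \<in> J \<Longrightarrow> leJ j j' \<Longrightarrow> b' \<in> N j' \<Longrightarrow> b \<in> N j \<Longrightarrow>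
      S j' j b' b \<longleftrightarrow> S j j (proj j' j b') b"
    using assms(2) unfolding N.inverse_system_iff by blast
  show ?thesis
    unfolding F.inverse_system_iff
    using cons_projections_fs_proj[OF emb(1) proj(1)] coherent_projections_fs_proj[OF emb(1,2) proj(1,2)]
      fs_rel_iff_fs_proj[OF emb(1,3) proj(1,3)]
    by (intro exI[of _ "fs_proj M emb proj"]) (auto simp: split_paired_Ball_Sigma)
qed

end

theorem proposition2p7:
  fixes I :: "'i set" and leI :: "'i \<Rightarrow> 'i \<Rightarrow> bool"
    and M :: "'i \<Rightarrow> 'a set" and R :: "'i \<Rightarrow> 'i \<Rightarrow> 'a \<Rightarrow> 'a \<Rightarrow> bool"
    and J :: "'j set" and leJ :: "'j \<Rightarrow> 'j \<Rightarrow> bool"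
    and N :: "'j \<Rightarrow> 'b set" and S :: "'j \<Rightarrow> 'j \<Rightarrow> 'b \<Rightarrow> 'b \<Rightarrow> bool"
  assumes "factor_system I leI M R" and "factor_system J leJ N S"
  shows "factor_system (I \<times> J) (fs_le leI leJ) (fs_states I leI M R J leJ N S) (fs_rel I leI M R J leJ N S)
    \<and> (cond_Fun J leJ N S \<longrightarrow>
         cond_Fun (I \<times> J) (fs_le leI leJ) (fs_states I leI M R J leJ N S) (fs_rel I leI M R J leJ N S))
    \<and> (cond_Stab J leJ N S \<longrightarrow>
         cond_Stab (I \<times> J) (fs_le leI leJ) (fs_states I leI M R J leJ N S) (fs_rel I leI M R J leJ N S))
    \<and> (inverse_system I leI M R \<and> direct_system J leJ N S \<longrightarrow>
         direct_system (I \<times> J) (fs_le leI leJ) (fs_states I leI M R J leJ N S) (fs_rel I leI M R J leJ N S))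
    \<and> (direct_system I leI M R \<and> inverse_system J leJ N S \<longrightarrow>
         inverse_system (I \<times> J) (fs_le leI leJ) (fs_states I leI M R J leJ N S) (fs_rel I leI M R J leJ N S))"
proof -
  interpret fun_space I leI M R J leJ N S
    using assms by unfold_locales (simp_all add: factor_system_def)
  obtain emb where "coherent_embeddings I leI M R emb"
    using assms(1) unfolding factor_system_def by blast
  then interpret prefactor_fun_space I leI M R J leJ N S
    by unfold_locales (rule prefactor_system_fs)
  show ?thesis
    using factor_system_fs[OF assms] cond_Fun_fs cond_Stab_fs direct_system_fs inverse_system_fs by blast
qed

end
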